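(* Let $X_1, X_2, \dots$ be i.i.d. random variables with $\mathbb{P}(X_1 = l) = p_l$ for $l \in \mathbb{Z}^+$. Fix integers $k \ge 1$ and $0 \le j \le k$, and let $n \ge k+1$. Then \[ \mathbb{P}(X_n \in R_j^k) = \sum_{i} \binom{k}{j} S_i^{j} (C_{i-1})^{k-j} p_i , \] and consequently, for every $i \in \mathbb{Z}^+$, \[ q_i := \mathbb{P}(X_n = i \mid X_n \in R_j^k) = \frac{\binom{k}{j} S_i^j (C_{i-1})^{k-j} p_i}{\sum_{l} \binom{k}{j} S_l^{j} (C_{l-1})^{k-j} p_l}. \]
   Context: For $i \in \mathbb{Z}^+$, $S_i = \mathbb{P}(X_1 \ge i) = \sum_{s \ge i} p_s$ and $C_i = \mathbb{P}(X_1 \le i) = \sum_{l=1}^{i} p_l$, with $C_0 = 0$ (so $S_i + C_{i-1} = 1$); sums over $i$ or $l$ range over $\mathbb{Z}^+$, and $0^0 = 1$. For $n \ge k+1$, $X_n$ is called a $j$-recent-$k$-record, written $X_n \in R_j^k$, if exactly $j$ of the $k$ values $X_{n-k}, X_{n-k+1}, \dots, X_{n-1}$ are at least as large as $X_n$, i.e. $|\{p : 1 \le p \le k,\ X_{n-p} \ge X_n\}| = j$. *)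

theory Defs
  imports "HOL-Probability.Probability"
begin

definition tailS :: "(nat \<Rightarrow> real) \<Rightarrow> nat \<Rightarrow> real" where
  "tailS p i = (\<Sum>s. p (s + i))"

text \<open>Cumulative probability C_i = P(X_1 <= i) = sum over 1 <= l <= i of p_l (so C_0 = 0).\<close>
definition cumC :: "(nat \<Rightarrow> real) \<Rightarrow> nat \<Rightarrow> real" where
  "cumC p i = (\<Sum>l\<in>{1..i}. p l)"

definition recent_record :: "(nat \<Rightarrow> 'a \<Rightarrow> nat) \<Rightarrow> nat \<Rightarrow> nat \<Rightarrow> nat \<Rightarrow> 'a \<Rightarrow> bool" where
  "recent_record X j k n \<omega> \<longleftrightarrow> card {q \<in> {1..k}. X (n - q) \<omega> \<ge> X n \<omega>} = j"

end

theory Submission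
  imports Defs
begin

text \<open>Fix the value i of X n. The event that exactly j of the k preceding values are at least i
splits according to the set A of lags q at which X (n - q) \<ge> i. By independence, the pattern
with a given A has probability p i * S i ^ card A * C (i - 1) ^ (k - card A), and there are
k choose j sets A of size j. Summing over the values i \<ge> 1 gives the law of total probability
for the record event; the conditional probabilities are the quotients.\<close>

lemma (in prob_space) events_count_space_pred:
  assumes "Z \<in> measurable M (count_space UNIV)"
  shows "{\<omega> \<in> space M. P (Z \<omega>)} \<in> events"
  using measurable_sets[OF assms, of "{x. P x}"] by (simp add: vimage_def Int_def conj_commute)

lemma (in prob_space) prob_ge_eq_tailS:
  assumes Z: "Z \<in> measurable M (count_space UNIV)"
    and distr: "\<And>l. l \<ge> 1 \<Longrightarrow> prob {\<omega> \<in> space M. Z \<omega> = l} = p l"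
    and "i \<ge> 1"
  shows "prob {\<omega> \<in> space M. i \<le> Z \<omega>} = tailS p i"
proof -
  have "(\<lambda>s. prob {\<omega> \<in> space M. Z \<omega> = s + i}) sums prob (\<Union>s. {\<omega> \<in> space M. Z \<omega> = s + i})"
    by (rule finite_measure_UNION)
      (auto simp: disjoint_family_on_def intro: events_count_space_pred[OF Z])
  moreover have "(\<Union>s. {\<omega> \<in> space M. Z \<omega> = s + i}) = {\<omega> \<in> space M. i \<le> Z \<omega>}"
    by (auto simp: le_iff_add add.commute)
  ultimately show ?thesis
    using distr \<open>i \<ge> 1\<close> by (simp add: tailS_def sums_unique)
qed

lemma (in prob_space) prob_le_eq_cumC:
  assumes Z: "Z \<in> measurable M (count_space UNIV)"
    and distr: "\<And>l. l \<ge> 1 \<Longrightarrow> prob {\<omega> \<in> space M. Z \<omega> = l} = p l"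
    and pos: "AE \<omega> in M. Z \<omega> \<ge> 1"
  shows "prob {\<omega> \<in> space M. Z \<omega> \<le> i} = cumC p i"
proof -
  have "{\<omega> \<in> space M. Z \<omega> \<le> i} = (\<Union>l\<in>insert 0 {1..i}. {\<omega> \<in> space M. Z \<omega> = l})"
    by auto
  also have "prob \<dots> = (\<Sum>l\<in>insert 0 {1..i}. prob {\<omega> \<in> space M. Z \<omega> = l})"
    by (rule finite_measure_finite_Union)
      (auto simp: disjoint_family_on_def intro: events_count_space_pred[OF Z])
  also have "\<dots> = prob {\<omega> \<in> space M. Z \<omega> = 0} + cumC p i"
    using distr by (simp add: cumC_def)
  also have "prob {\<omega> \<in> space M. Z \<omega> = 0} = 0"
    using pos by (intro prob_eq_0_AE) auto
  finally show ?thesis by simp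
qed

lemma (in prob_space) prob_eq_suminf_positive_values:
  assumes pos: "AE \<omega> in M. Z \<omega> \<ge> 1"
    and ev: "\<And>i. {\<omega> \<in> space M. Z \<omega> = i \<and> P \<omega>} \<in> events"
  shows "prob {\<omega> \<in> space M. P \<omega>} = (\<Sum>i. prob {\<omega> \<in> space M. Z \<omega> = Suc i \<and> P \<omega>})"
proof -
  let ?U = "\<Union>i. {\<omega> \<in> space M. Z \<omega> = Suc i \<and> P \<omega>}"
  have "(\<lambda>i. prob {\<omega> \<in> space M. Z \<omega> = Suc i \<and> P \<omega>}) sums prob ?U"
    by (rule finite_measure_UNION) (auto simp: disjoint_family_on_def intro: ev)
  moreover have "prob ?U = prob (\<Union>i. {\<omega> \<in> space M. Z \<omega> = i \<and> P \<omega>})"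
    using pos ev by (intro finite_measure_eq_AE) (auto simp: gr0_conv_Suc Suc_le_eq)
  moreover have "(\<Union>i. {\<omega> \<in> space M. Z \<omega> = i \<and> P \<omega>}) = {\<omega> \<in> space M. P \<omega>}"
    by auto
  ultimately show ?thesis by (simp add: sums_unique)
qed

lemma (in prob_space) indep_varsD_reindex:
  assumes indep: "indep_vars M' X I"
    and g: "inj_on g K" "g ` K \<subseteq> I" and K: "K \<noteq> {}" "finite K"
    and Y: "\<And>q. q \<in> K \<Longrightarrow> Y q \<in> sets (M' (g q))"
  shows "prob (\<Inter>q\<in>K. X (g q) -` Y q \<inter> space M) = (\<Prod>q\<in>K. prob (X (g q) -` Y q \<inter> space M))"
proof -
  define B where "B m = Y (the_inv_into K g m)" for m
  have B: "B (g q) = Y q" if "q \<in> K" for q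
    using that g(1) by (simp add: B_def the_inv_into_f_f)
  have "prob (\<Inter>m\<in>g ` K. X m -` B m \<inter> space M) = (\<Prod>m\<in>g ` K. prob (X m -` B m \<inter> space M))"
    using K g Y B by (intro indep_varsD[OF indep]) auto
  moreover have "(\<Inter>m\<in>g ` K. X m -` B m \<inter> space M) = (\<Inter>q\<in>K. X (g q) -` Y q \<inter> space M)"
    using B by auto
  ultimately show ?thesis
    using B by (simp add: prod.reindex[OF g(1)])
qed

lemma prod_if_mem_const:
  assumes "finite B" "A \<subseteq> B"
  shows "(\<Prod>q\<in>B. if q \<in> A then a else b) = a ^ card A * b ^ (card B - card A)"
proof -
  have "(\<Prod>q\<in>B. if q \<in> A then a else b) = (\<Prod>q\<in>A. a) * (\<Prod>q\<in>B - A. b)"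
    using assms by (simp add: prod.If_cases Int_absorb1 Diff_eq)
  also have "\<dots> = a ^ card A * b ^ (card B - card A)"
    using assms by (simp add: card_Diff_subset finite_subset)
  finally show ?thesis .
qed

locale positive_iid_sequence = prob_space M
  for M :: "'a measure" and X :: "nat \<Rightarrow> 'a \<Rightarrow> nat" and p :: "nat \<Rightarrow> real" +
  assumes random_variable_X: "\<And>m. m \<ge> 1 \<Longrightarrow> X m \<in> measurable M (count_space UNIV)"
    and indep_X: "indep_vars (\<lambda>_. count_space UNIV) X {1..}"
    and prob_X_eq: "\<And>m l. m \<ge> 1 \<Longrightarrow> l \<ge> 1 \<Longrightarrow> prob {\<omega> \<in> space M. X m \<omega> = l} = p l"
    and X_pos: "\<And>m. m \<ge> 1 \<Longrightarrow> AE \<omega> in M. X m \<omega> \<ge> 1"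
begin

text \<open>Lag q = 0 is X n itself; the pattern event is the intersection of the events
X (n - q) \<in> record_window i A q over the window 0 \<le> q \<le> k.\<close>

definition record_window :: "nat \<Rightarrow> nat set \<Rightarrow> nat \<Rightarrow> nat set" where
  "record_window i A q = (if q = 0 then {i} else if q \<in> A then {i..} else {..<i})"

lemma record_pattern_eq_INT:
  assumes "A \<subseteq> {1..k}"
  shows "{\<omega> \<in> space M. X n \<omega> = i \<and> {q \<in> {1..k}. i \<le> X (n - q) \<omega>} = A}
    = (\<Inter>q\<in>{0..k}. X (n - q) -` record_window i A q \<inter> space M)"
proof (intro equalityI subsetI)
  fix \<omega> assume "\<omega> \<in> (\<Inter>q\<in>{0..k}. X (n - q) -` record_window i A q \<inter> space M)"
  then have "\<omega> \<in> space M" "X n \<omega> = i" "\<forall>q\<in>{1..k}. q \<in> A \<longleftrightarrow> i \<le> X (n - q) \<omega>"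
    by (fastforce simp: record_window_def split: if_splits)+
  then show "\<omega> \<in> {\<omega> \<in> space M. X n \<omega> = i \<and> {q \<in> {1..k}. i \<le> X (n - q) \<omega>} = A}"
    using assms by auto
qed (auto simp: record_window_def)

lemma events_record_pattern:
  assumes "k < n" "A \<subseteq> {1..k}"
  shows "{\<omega> \<in> space M. X n \<omega> = i \<and> {q \<in> {1..k}. i \<le> X (n - q) \<omega>} = A} \<in> events"
  unfolding record_pattern_eq_INT[OF assms(2)]
  using assms(1) by (intro sets.finite_INT measurable_sets[OF random_variable_X]) auto

lemma prob_record_pattern:
  assumes "k < n" "A \<subseteq> {1..k}" "i \<ge> 1"
  shows "prob {\<omega> \<in> space M. X n \<omega> = i \<and> {q \<in> {1..k}. i \<le> X (n - q) \<omega>} = A}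
    = p i * tailS p i ^ card A * cumC p (i - 1) ^ (k - card A)"
proof -
  let ?E = "\<lambda>q. X (n - q) -` record_window i A q \<inter> space M"
  have factor: "prob (?E q) = (if q \<in> A then tailS p i else cumC p (i - 1))" if "q \<in> {1..k}" for q
  proof -
    have "n - q \<ge> 1" using that assms(1) by auto
    moreover have "?E q = (if q \<in> A then {\<omega> \<in> space M. i \<le> X (n - q) \<omega>}
        else {\<omega> \<in> space M. X (n - q) \<omega> \<le> i - 1})"
      using that assms(3) by (auto simp: record_window_def)
    ultimately show ?thesis
      using prob_ge_eq_tailS prob_le_eq_cumC random_variable_X prob_X_eq X_pos assms(3) by simp
  qed
  have "prob (\<Inter>q\<in>{0..k}. ?E q) = (\<Prod>q\<in>{0..k}. prob (?E q))"
    using assms(1) by (intro indep_varsD_reindex[OF indep_X]) (auto simp: inj_on_def)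
  also have "\<dots> = prob (?E 0) * (\<Prod>q\<in>{1..k}. prob (?E q))"
    by (subst atLeastAtMost_insertL[of 0 k, symmetric]) simp_all
  also have "prob (?E 0) = p i"
    using prob_X_eq[of n i] assms by (simp add: record_window_def vimage_def Int_def conj_commute)
  also have "(\<Prod>q\<in>{1..k}. prob (?E q)) = (\<Prod>q\<in>{1..k}. if q \<in> A then tailS p i else cumC p (i - 1))"
    using factor by (rule prod.cong[OF refl])
  also have "\<dots> = tailS p i ^ card A * cumC p (i - 1) ^ (k - card A)"
    using assms(2) by (simp add: prod_if_mem_const)
  finally show ?thesis
    unfolding record_pattern_eq_INT[OF assms(2)] by (simp add: mult_ac)
qed

lemma recent_record_value_eq_UN:
  "{\<omega> \<in> space M. X n \<omega> = i \<and> recent_record X j k n \<omega>}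
    = (\<Union>A\<in>{A. A \<subseteq> {1..k} \<and> card A = j}.
        {\<omega> \<in> space M. X n \<omega> = i \<and> {q \<in> {1..k}. i \<le> X (n - q) \<omega>} = A})"
  by (auto simp: recent_record_def)

lemma events_recent_record_value:
  assumes "k < n"
  shows "{\<omega> \<in> space M. X n \<omega> = i \<and> recent_record X j k n \<omega>} \<in> events"
  unfolding recent_record_value_eq_UN
  by (intro sets.finite_UN events_record_pattern[OF assms]) (auto intro: finite_subset[of _ "Pow {1..k}"])

lemma prob_recent_record_value:
  assumes "k < n" "i \<ge> 1"
  shows "prob {\<omega> \<in> space M. X n \<omega> = i \<and> recent_record X j k n \<omega>}
    = real (k choose j) * tailS p i ^ j * cumC p (i - 1) ^ (k - j) * p i"
proof -
  let ?S = "{A. A \<subseteq> {1..k} \<and> card A = j}"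
  have "prob {\<omega> \<in> space M. X n \<omega> = i \<and> recent_record X j k n \<omega>}
      = (\<Sum>A\<in>?S. prob {\<omega> \<in> space M. X n \<omega> = i \<and> {q \<in> {1..k}. i \<le> X (n - q) \<omega>} = A})"
    unfolding recent_record_value_eq_UN
  proof (rule finite_measure_finite_Union)
    show "finite ?S" by (rule finite_subset[of _ "Pow {1..k}"]) auto
    show "(\<lambda>A. {\<omega> \<in> space M. X n \<omega> = i \<and> {q \<in> {1..k}. i \<le> X (n - q) \<omega>} = A}) ` ?S \<subseteq> events"
      using events_record_pattern[OF assms(1)] by blast
  qed (auto simp: disjoint_family_on_def)
  also have "\<dots> = (\<Sum>A\<in>?S. p i * tailS p i ^ j * cumC p (i - 1) ^ (k - j))"
  proof (rule sum.cong[OF refl])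
    fix A assume "A \<in> ?S"
    then show "prob {\<omega> \<in> space M. X n \<omega> = i \<and> {q \<in> {1..k}. i \<le> X (n - q) \<omega>} = A}
        = p i * tailS p i ^ j * cumC p (i - 1) ^ (k - j)"
      using prob_record_pattern[OF assms(1) _ assms(2), of A] by simp
  qed
  also have "\<dots> = real (card ?S) * (p i * tailS p i ^ j * cumC p (i - 1) ^ (k - j))"
    by simp
  also have "card ?S = k choose j"
    using n_subsets[of "{1..k}" j] by simp
  finally show ?thesis by (simp add: mult_ac)
qed

lemma prob_recent_record:
  assumes "k < n"
  shows "prob {\<omega> \<in> space M. recent_record X j k n \<omega>}
    = (\<Sum>i. real (k choose j) * tailS p (Suc i) ^ j * cumC p i ^ (k - j) * p (Suc i))"
  using assms
  by (subst prob_eq_suminf_positive_values[OF X_pos events_recent_record_value])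
    (simp_all add: prob_recent_record_value)

end

theorem theorem2:
  fixes M :: "'a measure" and X :: "nat \<Rightarrow> 'a \<Rightarrow> nat" and p :: "nat \<Rightarrow> real"
    and k j n :: nat
  assumes "prob_space M"
    and meas: "\<And>m. m \<ge> 1 \<Longrightarrow> X m \<in> measurable M (count_space UNIV)"
    and indep: "prob_space.indep_vars M (\<lambda>_. count_space UNIV) X {1..}"
    and distr: "\<And>m l. m \<ge> 1 \<Longrightarrow> l \<ge> 1 \<Longrightarrow> measure M {\<omega> \<in> space M. X m \<omega> = l} = p l"
    and pos: "\<And>m. m \<ge> 1 \<Longrightarrow> (AE \<omega> in M. X m \<omega> \<ge> 1)"
    and "k \<ge> 1" and "j \<le> k" and "n \<ge> k + 1"
  shows "measure M {\<omega> \<in> space M. recent_record X j k n \<omega>}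
           = (\<Sum>i. real (k choose j) * tailS p (Suc i) ^ j * cumC p i ^ (k - j) * p (Suc i))
     \<and> (\<forall>i \<ge> 1.
           measure M {\<omega> \<in> space M. X n \<omega> = i \<and> recent_record X j k n \<omega>}
             / measure M {\<omega> \<in> space M. recent_record X j k n \<omega>}
           = (real (k choose j) * tailS p i ^ j * cumC p (i - 1) ^ (k - j) * p i)
             / (\<Sum>l. real (k choose j) * tailS p (Suc l) ^ j * cumC p l ^ (k - j) * p (Suc l)))"
proof -
  interpret positive_iid_sequence M X p
    using assms by (intro positive_iid_sequence.intro positive_iid_sequence_axioms.intro) simp_all
  have "k < n" using \<open>n \<ge> k + 1\<close> by simp
  then show ?thesis
    by (simp add: prob_recent_record prob_recent_record_value)
qed

end
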